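(* Let $(C,\mathfrak p,\mathfrak d)$ be a regular $q$-cycle coalgebra such that $\mathfrak p_{11}^1=0$, $\mathfrak p=\mathfrak d$, $\mathfrak p_{i0}^1=\delta_{1i}$ for all $i$, and $\mathfrak p_{1j}^1=0$ for all $j>0$. Then $\mathfrak p_{i1}^1=0$ for all $i$.
   Context: $K$ is an algebraically closed field of characteristic $0$ and $n\ge2$. $C$ is the coalgebra dual to $K[y]/\langle y^n\rangle$: basis $x_0,\dots,x_{n-1}$, $\Delta(x_i)=\sum_{j+k=i}x_j\otimes x_k$, $\epsilon(x_i)=\delta_{i0}$; $C\otimes C$ has the tensor product coalgebra structure; Sweedler notation $\Delta(b)=b_{(1)}\otimes b_{(2)}$. For linear maps $\mathfrak p,\mathfrak d\colon C\otimes C\to C$ write $a\cdot b=\mathfrak p(a\otimes b)$, $a:b=\mathfrak d(a\otimes b)$, $\mathfrak p(x_i\otimes x_j)=\sum_{k=0}^{n-1}\mathfrak p_{ij}^kx_k$, $\mathfrak d(x_i\otimes x_j)=\sum_{k=0}^{n-1}\mathfrak d_{ij}^kx_k$ (indices in $\{0,\dots,n-1\}$). A triple $(C,\mathfrak p,\mathfrak d)$ with $\mathfrak p,\mathfrak d$ coalgebra morphisms is a regular $q$-magma coalgebra if there are coalgebra morphisms $a\otimes b\mapsto a^b$, $a\otimes b\mapsto a_b$ from $C\otimes C$ to $C$ with $a^{b_{(1)}}\cdot b_{(2)}=(a\cdot b_{(1)})^{b_{(2)}}=\epsilon(b)a$ and $(a:b_{(2)})_{b_{(1)}}=a_{b_{(2)}}:b_{(1)}=\epsilon(b)a$.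 It is a regular $q$-cycle coalgebra if moreover for all $a,b,c$: (1) $(a\cdot b_{(1)})\cdot(c:b_{(2)})=(a\cdot c_{(2)})\cdot(b\cdot c_{(1)})$; (2) $(a\cdot b_{(1)}):(c\cdot b_{(2)})=(a:c_{(2)})\cdot(b:c_{(1)})$; (3) $(a:b_{(1)}):(c:b_{(2)})=(a:c_{(2)}):(b\cdot c_{(1)})$. *)

theory Defs
  imports "HOL-Computational_Algebra.Polynomial"
begin

text \<open>
  C has basis x_0, ..., x_(n-1) with Delta(x_i) = sum_(j+k=i) x_j (x) x_k and eps(x_i) = delta_(i0).
  A linear map f : C (x) C -> C is given by its structure constants f i j k,
  f(x_i (x) x_j) = sum_k f i j k x_k, indices ranging over {..<n}.
\<close>

type_synonym 'a smap = "nat \<Rightarrow> nat \<Rightarrow> nat \<Rightarrow> 'a"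

text \<open>Coalgebra morphism C (x) C -> C (tensor product coalgebra structure on C (x) C):
  compatibility with comultiplication, compared coefficientwise on x_k1 (x) x_k2,
  and with the counit.\<close>
definition coalg_morphism :: "nat \<Rightarrow> 'a::field smap \<Rightarrow> bool" where
  "coalg_morphism n f \<longleftrightarrow>
     (\<forall>i<n. \<forall>j<n. \<forall>k1<n. \<forall>k2<n.
        (if k1 + k2 < n then f i j (k1 + k2) else 0) =
        (\<Sum>a\<le>i. \<Sum>c\<le>j. f a c k1 * f (i - a) (j - c) k2)) \<and>
     (\<forall>i<n. \<forall>j<n. f i j 0 = (if i = 0 \<and> j = 0 then 1 else 0))"

text \<open>Regular q-magma coalgebra: p, d coalgebra morphisms, and there are coalgebra
  morphisms u (a (x) b |-> a^b) and l (a (x) b |-> a_b) with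
  a^(b1) . b2 = (a . b1)^(b2) = eps(b) a  and  (a : b2)_(b1) = a_(b2) : b1 = eps(b) a,
  checked on basis elements a = x_i, b = x_j, coefficient of x_m.\<close>
definition regular_q_magma_coalg :: "nat \<Rightarrow> 'a::field smap \<Rightarrow> 'a smap \<Rightarrow> bool" where
  "regular_q_magma_coalg n p d \<longleftrightarrow>
     coalg_morphism n p \<and> coalg_morphism n d \<and>
     (\<exists>u l. coalg_morphism n u \<and> coalg_morphism n l \<and>
       (\<forall>i<n. \<forall>j<n. \<forall>m<n.
          (\<Sum>j1\<le>j. \<Sum>k<n. u i j1 k * p k (j - j1) m) = (if j = 0 \<and> i = m then 1 else 0) \<and>
          (\<Sum>j1\<le>j. \<Sum>k<n. p i j1 k * u k (j - j1) m) = (if j = 0 \<and> i = m then 1 else 0) \<and>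
          (\<Sum>j1\<le>j. \<Sum>k<n. d i (j - j1) k * l k j1 m) = (if j = 0 \<and> i = m then 1 else 0) \<and>
          (\<Sum>j1\<le>j. \<Sum>k<n. l i (j - j1) k * d k j1 m) = (if j = 0 \<and> i = m then 1 else 0)))"

text \<open>Regular q-cycle coalgebra: additionally identities (1)-(3), on basis elements
  a = x_i, b = x_j, c = x_l, coefficient of x_m (they are trilinear).\<close>
definition regular_q_cycle_coalg :: "nat \<Rightarrow> 'a::field smap \<Rightarrow> 'a smap \<Rightarrow> bool" where
  "regular_q_cycle_coalg n p d \<longleftrightarrow>
     regular_q_magma_coalg n p d \<and>
     (\<forall>i<n. \<forall>j<n. \<forall>l<n. \<forall>m<n.
        (\<Sum>j1\<le>j. \<Sum>k<n. \<Sum>k'<n. p i j1 k * d l (j - j1) k' * p k k' m) =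
        (\<Sum>l1\<le>l. \<Sum>k<n. \<Sum>k'<n. p i (l - l1) k * p j l1 k' * p k k' m) \<and>
        (\<Sum>j1\<le>j. \<Sum>k<n. \<Sum>k'<n. p i j1 k * p l (j - j1) k' * d k k' m) =
        (\<Sum>l1\<le>l. \<Sum>k<n. \<Sum>k'<n. d i (l - l1) k * d j l1 k' * p k k' m) \<and>
        (\<Sum>j1\<le>j. \<Sum>k<n. \<Sum>k'<n. d i j1 k * d l (j - j1) k' * d k k' m) =
        (\<Sum>l1\<le>l. \<Sum>k<n. \<Sum>k'<n. d i (l - l1) k * p j l1 k' * d k k' m))"

end

theory Submission
  imports Defs
begin

(* Dually, p is the algebra map y \<mapsto> f(y,z) = \<Sum> p i j 1 y^i z^j into K[y,z]/(y^n,z^n),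
   and p i j K is the coefficient of y^i z^j in f^K.  The hypotheses say f(y,0) = y and that
   f has no terms y z^j with j > 0.  If f(0,z) \<noteq> 0 with lowest term c z^q, identity (1) at
   (x_i, x_0, x_q) reads p i q 1 = p i q 1 + c * p i 1 1.  Otherwise f = y g with g(0,z) = 1,
   so f^K has y-adic order K with leading part y^K; if p a 1 1 = 0 for all a < k, identity (1)
   at (x_k, x_1, x_k) collapses to (p k 1 1)^2 = 0, and induction on k finishes the proof. *)

lemma sum_eq_single:
  assumes "finite A" "a \<in> A" "\<And>x. x \<in> A \<Longrightarrow> x \<noteq> a \<Longrightarrow> f x = 0"
  shows "sum f A = f a"
  using assms by (simp add: sum.remove sum.neutral)

lemma sum_sum_eq_single:
  assumes "finite A" "finite B" "a \<in> A" "b \<in> B"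
    and "\<And>x y. x \<in> A \<Longrightarrow> y \<in> B \<Longrightarrow> (x, y) \<noteq> (a, b) \<Longrightarrow> f x y = 0"
  shows "(\<Sum>x\<in>A. \<Sum>y\<in>B. f x y) = f a b"
proof -
  have "(\<Sum>x\<in>A. \<Sum>y\<in>B. f x y) = (\<Sum>y\<in>B. f a y)"
    using assms by (intro sum_eq_single) (auto intro: sum.neutral)
  also have "\<dots> = f a b"
    using assms by (intro sum_eq_single) auto
  finally show ?thesis .
qed

context
  fixes n :: nat and p :: "'a::field smap"
  assumes coalg: "coalg_morphism n p"
begin

lemma coeff_comult:
  assumes "i < n" "j < n" "k1 + k2 < n"
  shows "p i j (k1 + k2) = (\<Sum>a\<le>i. \<Sum>c\<le>j. p a c k1 * p (i - a) (j - c) k2)"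
proof -
  have "k1 < n" "k2 < n" using assms(3) by auto
  then show ?thesis
    using coalg assms unfolding coalg_morphism_def by (metis (no_types, lifting))
qed

lemma coeff_counit: "i < n \<Longrightarrow> j < n \<Longrightarrow> p i j 0 = (if i = 0 \<and> j = 0 then 1 else 0)"
  using coalg unfolding coalg_morphism_def by blast

lemma coeff_zero_left_eq_zero:
  assumes order: "\<forall>j<q. p 0 j 1 = 0"
  shows "j < K * q \<Longrightarrow> j < n \<Longrightarrow> K < n \<Longrightarrow> p 0 j K = 0"
proof (induction K arbitrary: j)
  case 0
  then show ?case by simp
next
  case (Suc K)
  have "p 0 j (K + 1) = (\<Sum>c\<le>j. p 0 c K * p 0 (j - c) 1)"
    using coeff_comult[of 0 j K 1] Suc.prems by simp
  also have "\<dots> = 0"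
  proof (intro sum.neutral ballI)
    fix c assume "c \<in> {..j}"
    then have "c < K * q \<and> c < n \<or> j - c < q" using Suc.prems(1,2) by auto
    then show "p 0 c K * p 0 (j - c) 1 = 0"
      using Suc.IH Suc.prems(3) order by auto
  qed
  finally show ?case by simp
qed

lemma coeff_below_diag_eq_zero:
  assumes zero_left: "\<forall>b<n. p 0 b 1 = 0"
  shows "a < K \<Longrightarrow> b < n \<Longrightarrow> K < n \<Longrightarrow> p a b K = 0"
proof (induction K arbitrary: a b)
  case 0
  then show ?case by simp
next
  case (Suc K)
  have "p a b (1 + K) = (\<Sum>a'\<le>a. \<Sum>c\<le>b. p a' c 1 * p (a - a') (b - c) K)"
    using coeff_comult[of a b 1 K] Suc.prems by simp
  also have "\<dots> = 0"
  proof (intro sum.neutral ballI)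
    fix a' c assume "a' \<in> {..a}" "c \<in> {..b}"
    then have "a' = 0 \<and> c < n \<or> a - a' < K \<and> b - c < n \<and> K < n"
      using Suc.prems by auto
    then show "p a' c 1 * p (a - a') (b - c) K = 0"
      using Suc.IH zero_left by auto
  qed
  finally show ?case by simp
qed

lemma coeff_diag:
  assumes zero_left: "\<forall>b<n. p 0 b 1 = 0"
    and one_left: "\<forall>b<n. p 1 b 1 = (if b = 0 then 1 else 0)"
  shows "1 \<le> K \<Longrightarrow> K < n \<Longrightarrow> b < n \<Longrightarrow> p K b K = (if b = 0 then 1 else 0)"
proof (induction K arbitrary: b rule: dec_induct)
  case base
  then show ?case using one_left by simp
next
  case (step K)
  have "p (1 + K) b (1 + K) = (\<Sum>a\<le>1 + K. \<Sum>c\<le>b. p a c 1 * p (1 + K - a) (b - c) K)"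
    using coeff_comult[of "1 + K" b 1 K] step.prems by simp
  also have "\<dots> = p 1 0 1 * p (1 + K - 1) (b - 0) K"
  proof (rule sum_sum_eq_single)
    fix a c assume "a \<in> {..1 + K}" "c \<in> {..b}" "(a, c) \<noteq> (1, 0)"
    then have "a = 0 \<or> 1 + K - a < K \<or> a = 1 \<and> 0 < c"
      by auto
    then show "p a c 1 * p (1 + K - a) (b - c) K = 0"
      using step.prems \<open>c \<in> {..b}\<close> zero_left one_left coeff_below_diag_eq_zero[OF zero_left]
      by auto
  qed auto
  also have "\<dots> = (if b = 0 then 1 else 0)"
    using step one_left by simp
  finally show ?case by simp
qed

context
  assumes unit: "\<forall>i<n. p i 0 1 = (if i = 1 then 1 else 0)"
begin

lemma coeff_zero_right: "a < n \<Longrightarrow> K < n \<Longrightarrow> p a 0 K = (if a = K then 1 else 0)"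
proof (induction K arbitrary: a)
  case 0
  then show ?case using coeff_counit by simp
next
  case (Suc K)
  have "p a 0 (1 + K) = (\<Sum>a'\<le>a. p a' 0 1 * p (a - a') 0 K)"
    using coeff_comult[of a 0 1 K] Suc.prems by simp
  also have "\<dots> = (\<Sum>a'\<le>a. if a' = 1 then p (a - 1) 0 K else 0)"
    using unit Suc.prems by (intro sum.cong) auto
  also have "\<dots> = (if a = Suc K then 1 else 0)"
    using Suc unit by auto
  finally show ?case by simp
qed

lemma coeff_one_right_Suc:
  assumes "a < n" "Suc K < n"
  shows "p a 1 (Suc K) = (if 1 \<le> a then p (a - 1) 1 K else 0) + (if K \<le> a then p (a - K) 1 1 else 0)"
proof -
  have "p a 1 (1 + K) = (\<Sum>a'\<le>a. \<Sum>c\<le>1. p a' c 1 * p (a - a') (1 - c) K)"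
    using coeff_comult[of a 1 1 K] assms by simp
  also have "\<dots> = (\<Sum>a'\<le>a. p a' 0 1 * p (a - a') 1 K) + (\<Sum>a'\<le>a. p a' 1 1 * p (a - a') 0 K)"
    by (simp add: sum.distrib)
  also have "(\<Sum>a'\<le>a. p a' 0 1 * p (a - a') 1 K) = (\<Sum>a'\<le>a. if a' = 1 then p (a - 1) 1 K else 0)"
    using unit assms by (intro sum.cong) auto
  also have "(\<Sum>a'\<le>a. p a' 1 1 * p (a - a') 0 K) = (if K \<le> a then p (a - K) 1 1 else 0)"
  proof (cases "K \<le> a")
    case True
    have "(\<Sum>a'\<le>a. p a' 1 1 * p (a - a') 0 K) = p (a - K) 1 1 * p (a - (a - K)) 0 K"
      using assms coeff_zero_right by (intro sum_eq_single) auto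
    then show ?thesis using True assms coeff_zero_right by simp
  next
    case False
    then show ?thesis using assms coeff_zero_right by (auto intro: sum.neutral)
  qed
  finally show ?thesis by simp
qed

lemma coeff_one_right_eq_zero:
  assumes below: "\<forall>a<k. p a 1 1 = 0"
  shows "1 \<le> K \<Longrightarrow> K < n \<Longrightarrow> a < n \<Longrightarrow> a + 1 < k + K \<Longrightarrow> p a 1 K = 0"
proof (induction K arbitrary: a rule: dec_induct)
  case base
  then show ?case using below by simp
next
  case (step K)
  have "1 \<le> a \<Longrightarrow> p (a - 1) 1 K = 0" and "K \<le> a \<Longrightarrow> p (a - K) 1 1 = 0"
    using step below by auto
  then show ?case
    using coeff_one_right_Suc[of a K] step.prems by simp
qed

end

end

definition first_cycle_identity :: "nat \<Rightarrow> 'a::field smap \<Rightarrow> bool" where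
  "first_cycle_identity n p \<longleftrightarrow>
     (\<forall>i<n. \<forall>j<n. \<forall>l<n. \<forall>m<n.
        (\<Sum>j1\<le>j. \<Sum>k<n. \<Sum>k'<n. p i j1 k * p l (j - j1) k' * p k k' m) =
        (\<Sum>l1\<le>l. \<Sum>k<n. \<Sum>k'<n. p i (l - l1) k * p j l1 k' * p k k' m))"

lemma regular_q_cycle_coalg_first_cycle_identity:
  assumes "regular_q_cycle_coalg n p d" "\<forall>i<n. \<forall>j<n. \<forall>k<n. p i j k = d i j k"
  shows "first_cycle_identity n p"
  unfolding first_cycle_identity_def
proof (intro allI impI)
  fix i j l m assume "i < n" "j < n" "l < n" "m < n"
  moreover have "(\<Sum>j1\<le>j. \<Sum>k<n. \<Sum>k'<n. p i j1 k * p l (j - j1) k' * p k k' m) =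
      (\<Sum>j1\<le>j. \<Sum>k<n. \<Sum>k'<n. p i j1 k * d l (j - j1) k' * p k k' m)"
    using assms(2) \<open>j < n\<close> \<open>l < n\<close> by (intro sum.cong refl) auto
  ultimately show "(\<Sum>j1\<le>j. \<Sum>k<n. \<Sum>k'<n. p i j1 k * p l (j - j1) k' * p k k' m) =
      (\<Sum>l1\<le>l. \<Sum>k<n. \<Sum>k'<n. p i (l - l1) k * p j l1 k' * p k k' m)"
    using assms(1) unfolding regular_q_cycle_coalg_def by simp
qed

context
  fixes n :: nat and p :: "'a::field smap"
  assumes coalg: "coalg_morphism n p"
    and unit: "\<forall>i<n. p i 0 1 = (if i = 1 then 1 else 0)"
    and cycle: "first_cycle_identity n p"
begin

lemma first_cycle_identity_one:
  assumes "i < n" "j < n" "l < n" "1 < n"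
  shows "(\<Sum>j1\<le>j. \<Sum>k<n. \<Sum>k'<n. p i j1 k * p l (j - j1) k' * p k k' 1) =
    (\<Sum>l1\<le>l. \<Sum>k<n. \<Sum>k'<n. p i (l - l1) k * p j l1 k' * p k k' 1)"
  using cycle assms unfolding first_cycle_identity_def by blast

lemma coeff_one_one_eq_zero_of_zero_left_order:
  assumes q: "q < n" "p 0 q 1 \<noteq> 0" and order: "\<forall>j<q. p 0 j 1 = 0" and "i < n"
  shows "p i 1 1 = 0"
proof -
  have "q \<noteq> 0" using q unit[rule_format, of 0] by (cases q) auto
  then obtain q' where q': "q = Suc q'" by (cases q) auto
  have "1 < n" using q q' by simp
  have zero_left_below: "p 0 l K = (if l = 0 \<and> K = 0 then 1 else 0)" if "l < q" "K < n" for l K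
  proof (cases "K = 0")
    case True
    then show ?thesis using coeff_counit[OF coalg] that q by simp
  next
    case False
    then have "l < K * q" using that by (simp add: less_le_trans)
    then show ?thesis using coeff_zero_left_eq_zero[OF coalg order] False that q by simp
  qed
  have zero_left_q: "p 0 q K = (if K = 1 then p 0 q 1 else 0)" if "K < n" for K
  proof -
    have "2 \<le> K \<Longrightarrow> q < K * q" using \<open>q \<noteq> 0\<close> by simp
    then show ?thesis
      using coeff_counit[OF coalg] coeff_zero_left_eq_zero[OF coalg order] \<open>q \<noteq> 0\<close> that q
      by (cases "K = 0 \<or> K = 1") auto
  qed
  let ?T = "\<lambda>l1. \<Sum>k<n. \<Sum>k'<n. p i (q - l1) k * p 0 l1 k' * p k k' 1"
  have "p i q 1 = p i 0 i * p q 0 q * p i q 1"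
    using coeff_zero_right[OF coalg unit] \<open>i < n\<close> q by simp
  also have "\<dots> = (\<Sum>k<n. \<Sum>k'<n. p i 0 k * p q 0 k' * p k k' 1)"
    using coeff_zero_right[OF coalg unit] \<open>i < n\<close> q by (intro sum_sum_eq_single[symmetric]) auto
  also have "\<dots> = (\<Sum>l1\<le>q. ?T l1)"
    using first_cycle_identity_one[of i 0 q] \<open>i < n\<close> q \<open>1 < n\<close> by simp
  also have "\<dots> = ?T 0 + (\<Sum>l\<le>q'. ?T (Suc l))"
    unfolding q' by (rule sum.atMost_Suc_shift)
  also have "(\<Sum>l\<le>q'. ?T (Suc l)) = ?T q"
  proof -
    have "(\<Sum>l\<le>q'. ?T (Suc l)) = ?T (Suc q')"
      using zero_left_below q' by (intro sum_eq_single) auto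
    then show ?thesis using q' by simp
  qed
  also have "?T 0 = p i (q - 0) 1 * p 0 0 0 * p 1 0 1"
    using zero_left_below \<open>q \<noteq> 0\<close> unit \<open>1 < n\<close> by (intro sum_sum_eq_single) auto
  also have "?T q = p i (q - q) i * p 0 q 1 * p i 1 1"
    using coeff_zero_right[OF coalg unit] zero_left_q \<open>i < n\<close> \<open>1 < n\<close>
    by (intro sum_sum_eq_single) auto
  finally show ?thesis
    using coeff_zero_right[OF coalg unit] coeff_counit[OF coalg] unit \<open>i < n\<close> \<open>1 < n\<close> q
    by simp
qed

lemma coeff_one_one_eq_zero_of_zero_left_vanishing:
  assumes "1 < n"
    and zero_left: "\<forall>b<n. p 0 b 1 = 0" and one_left: "\<forall>b<n. 0 < b \<longrightarrow> p 1 b 1 = 0"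
  shows "k < n \<Longrightarrow> p k 1 1 = 0"
proof (induction k rule: less_induct)
  case (less k)
  consider "k = 0" | "k = 1" | "2 \<le> k" by linarith
  then show ?case
  proof cases
    case 1
    then show ?thesis using zero_left \<open>1 < n\<close> by simp
  next
    case 2
    then show ?thesis using one_left less.prems by simp
  next
    case 3
    have one_left_unit: "\<forall>b<n. p 1 b 1 = (if b = 0 then 1 else 0)"
      using one_left unit \<open>1 < n\<close> by auto
    define r where "r = p k 1 1"
    have k_one_right: "p k 1 K = (if K = 1 then r else 0)" if "K < n" for K
    proof -
      have "2 \<le> K \<Longrightarrow> p k 1 K = 0"
        using coeff_one_right_eq_zero[OF coalg unit, of k K k] less that by simp
      then show ?thesis
        using coeff_counit[OF coalg] less.prems \<open>1 < n\<close> that r_def by (cases "K = 0 \<or> K = 1") auto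
    qed
    have one_left_coeffs: "p 1 l K = (if l = 0 \<and> K = 1 then 1 else 0)" if "l < n" "K < n" for l K
      using coeff_counit[OF coalg] coeff_below_diag_eq_zero[OF coalg zero_left, of 1 K l]
        one_left_unit \<open>1 < n\<close> that by (cases "K = 0 \<or> K = 1") auto
    have kk_products_vanish: "p k k K * p K 1 1 = 0" if "K < n" for K
    proof -
      consider "K < k" | "K = k" | "k < K" by linarith
      then show ?thesis
        using less.IH coeff_diag[OF coalg zero_left one_left_unit, of k k]
          coeff_below_diag_eq_zero[OF coalg zero_left, of k K k] 3 less.prems that
        by cases auto
    qed
    let ?S = "\<lambda>j1. \<Sum>K<n. \<Sum>K'<n. p k j1 K * p k (1 - j1) K' * p K K' 1"
    have "r * r = p k 0 k * p k (1 - 0) 1 * p k 1 1"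
      using coeff_zero_right[OF coalg unit] less.prems r_def by simp
    also have "\<dots> = ?S 0"
      using coeff_zero_right[OF coalg unit] k_one_right less.prems \<open>1 < n\<close>
      by (intro sum_sum_eq_single[symmetric]) auto
    also have "\<dots> = ?S 0 + ?S 1"
    proof -
      have "p k 1 K * p k 0 K' * p K K' 1 = 0" if "K < n" "K' < n" for K K'
        using k_one_right coeff_zero_right[OF coalg unit] one_left less.prems 3 that by auto
      then show ?thesis by (simp add: sum.neutral)
    qed
    also have "\<dots> = (\<Sum>j1\<le>1. ?S j1)"
      by simp
    also have "\<dots> = (\<Sum>l1\<le>k. \<Sum>K<n. \<Sum>K'<n. p k (k - l1) K * p 1 l1 K' * p K K' 1)"
      using first_cycle_identity_one[of k 1 k] less.prems \<open>1 < n\<close> by simp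
    also have "\<dots> = 0"
      using one_left_coeffs kk_products_vanish less.prems by (intro sum.neutral ballI) auto
    finally show ?thesis using r_def by simp
  qed
qed

end

theorem proposition7p1:
  fixes n :: nat and p d :: "'a::{alg_closed_field, field_char_0} smap"
  assumes "n \<ge> 2"
    and "regular_q_cycle_coalg n p d"
    and "p 1 1 1 = 0"
    and "\<forall>i<n. \<forall>j<n. \<forall>k<n. p i j k = d i j k"
    and "\<forall>i<n. p i 0 1 = (if i = 1 then 1 else 0)"
    and "\<forall>j<n. j > 0 \<longrightarrow> p 1 j 1 = 0"
  shows "\<forall>i<n. p i 1 1 = 0"
proof -
  have coalg: "coalg_morphism n p"
    using assms(2) unfolding regular_q_cycle_coalg_def regular_q_magma_coalg_def by blast
  have cycle: "first_cycle_identity n p"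
    using regular_q_cycle_coalg_first_cycle_identity assms(2,4) .
  show ?thesis
  proof (cases "\<exists>q<n. p 0 q 1 \<noteq> 0")
    case True
    then obtain q where "q < n" "p 0 q 1 \<noteq> 0" "\<forall>j<q. p 0 j 1 = 0"
      using exists_least_iff[of "\<lambda>q. q < n \<and> p 0 q 1 \<noteq> 0"] by (meson less_trans)
    then show ?thesis
      using coeff_one_one_eq_zero_of_zero_left_order[OF coalg assms(5) cycle] by blast
  next
    case False
    then show ?thesis
      using coeff_one_one_eq_zero_of_zero_left_vanishing[OF coalg assms(5) cycle _ _ assms(6)]
        assms(1) by auto
  qed
qed

end
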